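(* Let $n\ge 3$ be odd, $d,R\in\mathbb{Q}$ with $d\ne0$ and $R$ not a square in $\mathbb{Q}$, $D=d^2-R$. Then $f_n=f_n(Z,d,R)$ is irreducible in $\mathbb{Q}[Z]$ if and only if, for every prime $p$ dividing $n$, the number $(d+\sqrt R)/(d-\sqrt R)$ is not a $p$th power in $\mathbb{Q}(\sqrt R)$.
   Context: For $k\ge1$, $F_k=\sum_{j=0}^{\lfloor k/2\rfloor}(-1)^j\frac{k}{k-j}\binom{k-j}{j}Z^{k-2j}$ (so $2\cos(kx)=F_k(2\cos x)$). For odd $n\ge3$, $d\ne0$, $R$ non-square, $D=d^2-R$: $$f_n(Z,d,R)=\sqrt D^{\,n}F_n(Z/\sqrt D)-2dD^{(n-1)/2}=\sum_{j=0}^{(n-1)/2}(-1)^j\frac{n}{n-j}\binom{n-j}{j}D^jZ^{n-2j}-2dD^{(n-1)/2}.$$ *)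

theory Defs
  imports Complex_Main "HOL-Computational_Algebra.Polynomial"
begin

definition fpoly :: "nat \<Rightarrow> rat \<Rightarrow> rat \<Rightarrow> rat poly" where
  "fpoly n d R = (let D = d^2 - R in
     (\<Sum>j\<in>{0..(n - 1) div 2}.
        monom ((-1)^j * (of_nat n / of_nat (n - j)) * of_nat ((n - j) choose j) * D^j) (n - 2*j))
     - [: 2 * d * D ^ ((n - 1) div 2) :])"

definition sqrtR :: "rat \<Rightarrow> complex" where
  "sqrtR R = csqrt (of_real (of_rat R))"

definition quad_field :: "rat \<Rightarrow> complex set" where
  "quad_field R = {of_real (of_rat a) + of_real (of_rat b) * sqrtR R | a b. True}"

end

theory Submission
  imports Defs "HOL-Computational_Algebra.Fundamental_Theorem_Algebra"
begin

text \<open>Put \<open>D = d^2 - R\<close>, \<open>k = (n - 1)/2\<close>, \<open>a = D^k (d + sqrt R)\<close> and \<open>a' = D^k (d - sqrt R)\<close>,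
  so that \<open>a a' = D^n\<close>. Since \<open>f_n + 2 d D^k\<close> is the Dickson polynomial \<open>D_n(Z, D)\<close>, with
  \<open>D_n(u + D/u, D) = u^n + (D/u)^n\<close>, the substitution \<open>Z = u + D/u\<close> turns \<open>u^n f_n\<close> into
  \<open>(u^n - a)(u^n - a')\<close>. If \<open>X^n - a\<close> is irreducible over \<open>K = Q(sqrt R)\<close>, a rational factor
  \<open>g\<close> of \<open>f_n\<close> vanishes at \<open>w + D/w\<close> for all \<open>n\<close> roots \<open>w\<close> of \<open>X^n - a\<close>, so \<open>deg g \<ge> n\<close>; by
  Capelli's theorem this irreducibility holds unless \<open>a\<close> is a \<open>p\<close>-th power in \<open>K\<close> for a prime
  \<open>p\<close> dividing \<open>n\<close>. Conversely, if \<open>a = y^p\<close> with \<open>y \<in> K\<close> and \<open>n = p m\<close>, the trace of \<open>y\<close> is a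
  rational root \<open>c\<close> of \<open>D_p(Z, D^m) - 2 d D^k\<close>, and \<open>D_n(Z, D) = D_p(D_m(Z, D), D^m)\<close> exhibits the
  factor \<open>D_m(Z, D) - c\<close> of \<open>f_n\<close>. Finally, \<open>a\<close> is a \<open>p\<close>-th power in \<open>K\<close> iff
  \<open>(d + sqrt R)/(d - sqrt R) = a^2 / D^n\<close> is one, since \<open>p\<close> is odd.\<close>

section \<open>Polynomials over subfields of the complex numbers\<close>

definition complex_subfield :: "complex set \<Rightarrow> bool" where
  "complex_subfield F \<longleftrightarrow> 0 \<in> F \<and> 1 \<in> F \<and> (\<forall>x\<in>F. \<forall>y\<in>F. x + y \<in> F \<and> x * y \<in> F) \<and>
     (\<forall>x\<in>F. - x \<in> F \<and> inverse x \<in> F)"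

context
  fixes F :: "complex set"
  assumes F: "complex_subfield F"
begin

lemma subfield_0: "0 \<in> F" and subfield_1: "1 \<in> F"
  and subfield_add: "x \<in> F \<Longrightarrow> y \<in> F \<Longrightarrow> x + y \<in> F"
  and subfield_mult: "x \<in> F \<Longrightarrow> y \<in> F \<Longrightarrow> x * y \<in> F"
  and subfield_uminus: "x \<in> F \<Longrightarrow> - x \<in> F"
  and subfield_inverse: "x \<in> F \<Longrightarrow> inverse x \<in> F"
  using F by (auto simp: complex_subfield_def)

lemma subfield_diff: "x \<in> F \<Longrightarrow> y \<in> F \<Longrightarrow> x - y \<in> F"
  using subfield_add[of x "- y"] subfield_uminus[of y] by simp

lemma subfield_divide: "x \<in> F \<Longrightarrow> y \<in> F \<Longrightarrow> x / y \<in> F"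
  by (simp add: divide_inverse subfield_mult subfield_inverse)

lemma subfield_power: "x \<in> F \<Longrightarrow> x ^ n \<in> F"
  by (induction n) (auto intro: subfield_1 subfield_mult)

lemma subfield_sum: "(\<And>i. i \<in> A \<Longrightarrow> f i \<in> F) \<Longrightarrow> sum f A \<in> F"
  by (induction A rule: infinite_finite_induct) (auto intro: subfield_0 subfield_add)

lemma subfield_of_nat: "of_nat n \<in> F"
  by (induction n) (auto intro: subfield_0 subfield_1 subfield_add)

lemma subfield_of_int: "of_int n \<in> F"
  using subfield_of_nat[of "nat n"] subfield_uminus[OF subfield_of_nat[of "nat (- n)"]]
  by (cases "n \<ge> 0") simp_all

lemma subfield_of_rat: "of_rat r \<in> F"
  by (cases r) (auto simp: of_rat_rat intro: subfield_divide subfield_of_int)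

end

definition poly_over :: "complex set \<Rightarrow> complex poly \<Rightarrow> bool" where
  "poly_over F p \<longleftrightarrow> (\<forall>i. coeff p i \<in> F)"

lemma poly_over_mono: "F \<subseteq> E \<Longrightarrow> poly_over F p \<Longrightarrow> poly_over E p"
  by (auto simp: poly_over_def)

lemma poly_over_pCons_iff: "poly_over F (pCons c p) \<longleftrightarrow> c \<in> F \<and> poly_over F p"
  by (auto simp: poly_over_def coeff_pCons split: nat.split)

context
  fixes F :: "complex set"
  assumes F: "complex_subfield F"
begin

lemma poly_over_0: "poly_over F 0"
  using F by (simp add: poly_over_def subfield_0)

lemma poly_over_const: "c \<in> F \<Longrightarrow> poly_over F [:c:]"
  using F by (simp add: poly_over_pCons_iff poly_over_0)

lemma poly_over_1: "poly_over F 1"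
  using F by (simp add: one_pCons poly_over_const subfield_1)

lemma poly_over_X: "poly_over F [:0, 1:]"
  using F by (simp add: poly_over_pCons_iff subfield_0 subfield_1 poly_over_0)

lemma poly_over_monom: "c \<in> F \<Longrightarrow> poly_over F (monom c n)"
  using F by (simp add: poly_over_def coeff_monom subfield_0)

lemma poly_over_add: "poly_over F p \<Longrightarrow> poly_over F q \<Longrightarrow> poly_over F (p + q)"
  using F by (simp add: poly_over_def subfield_add)

lemma poly_over_uminus: "poly_over F p \<Longrightarrow> poly_over F (- p)"
  using F by (simp add: poly_over_def subfield_uminus)

lemma poly_over_diff: "poly_over F p \<Longrightarrow> poly_over F q \<Longrightarrow> poly_over F (p - q)"
  using F by (simp add: poly_over_def subfield_diff)

lemma poly_over_smult: "c \<in> F \<Longrightarrow> poly_over F p \<Longrightarrow> poly_over F (smult c p)"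
  using F by (simp add: poly_over_def subfield_mult)

lemma poly_over_mult: "poly_over F p \<Longrightarrow> poly_over F q \<Longrightarrow> poly_over F (p * q)"
  using F by (auto simp: poly_over_def coeff_mult intro!: subfield_sum subfield_mult)

lemma poly_over_power: "poly_over F p \<Longrightarrow> poly_over F (p ^ n)"
  by (induction n) (auto intro: poly_over_1 poly_over_mult)

lemma poly_over_pcompose: "poly_over F p \<Longrightarrow> poly_over F q \<Longrightarrow> poly_over F (pcompose p q)"
  by (induction p) (auto simp: pcompose_pCons poly_over_pCons_iff poly_over_0
      intro!: poly_over_add poly_over_const poly_over_mult)

lemma poly_in_subfield: "poly_over F p \<Longrightarrow> x \<in> F \<Longrightarrow> poly p x \<in> F"
  using F by (auto simp: poly_altdef poly_over_def intro!: subfield_sum subfield_mult subfield_power)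

lemma lead_coeff_in_subfield: "poly_over F p \<Longrightarrow> lead_coeff p \<in> F"
  by (simp add: poly_over_def)

lemma poly_over_div_mod:
  assumes "poly_over F p" "poly_over F q"
  shows "poly_over F (p div q) \<and> poly_over F (p mod q)"
  using assms(1)
proof (induction "degree p" arbitrary: p rule: less_induct)
  case (less p)
  show ?case
  proof (cases "q = 0 \<or> p = 0 \<or> degree p < degree q")
    case True
    thus ?thesis using less.prems by (auto simp: poly_over_0 div_poly_less mod_poly_less)
  next
    case False
    define t where "t = monom (lead_coeff p / lead_coeff q) (degree p - degree q)"
    define p' where "p' = p - t * q"
    have t: "poly_over F t" unfolding t_def using F assms(2) less.prems
      by (intro poly_over_monom subfield_divide lead_coeff_in_subfield)
    have "degree (t * q) = degree p"
      using False by (simp add: t_def degree_mult_eq degree_monom_eq)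
    moreover have "lead_coeff (t * q) = lead_coeff p"
      using False by (simp add: t_def lead_coeff_mult degree_monom_eq)
    ultimately
    have "degree p' \<le> degree p" "coeff p' (degree p) = 0"
      unfolding p'_def by (metis degree_diff_le order_refl, simp)
    hence "p' = 0 \<or> degree p' < degree p"
      by (metis le_neq_implies_less leading_coeff_0_iff)
    moreover have "poly_over F p'" unfolding p'_def using t assms(2) less.prems
      by (intro poly_over_diff poly_over_mult)
    ultimately have "poly_over F (p' div q) \<and> poly_over F (p' mod q)"
      using less.hyps[of p'] by (auto simp: poly_over_0)
    moreover have "p = p' + t * q" by (simp add: p'_def)
    hence "p div q = t + p' div q" "p mod q = p' mod q"
      using False by simp_all
    ultimately show ?thesis using t by (auto intro: poly_over_add)
  qed
qed

lemma poly_over_div: "poly_over F p \<Longrightarrow> poly_over F q \<Longrightarrow> poly_over F (p div q)"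
  and poly_over_mod: "poly_over F p \<Longrightarrow> poly_over F q \<Longrightarrow> poly_over F (p mod q)"
  using poly_over_div_mod by auto

lemma poly_over_bezout:
  assumes "poly_over F a" "poly_over F b"
  obtains g A B where "poly_over F g" "poly_over F A" "poly_over F B"
    "g = A * a + B * b" "g dvd a" "g dvd b"
proof -
  have "\<exists>g A B. poly_over F g \<and> poly_over F A \<and> poly_over F B \<and> g = A * a + B * b \<and> g dvd a \<and> g dvd b"
    using assms
  proof (induction "if b = 0 then 0 else Suc (degree b)" arbitrary: a b rule: less_induct)
    case (less b a)
    show ?case
    proof (cases "b = 0")
      case True
      thus ?thesis using less.prems
        by (intro exI[of _ a] exI[of _ 1] exI[of _ 0]) (auto intro: poly_over_1 poly_over_0)
    next
      case False
      hence "(if a mod b = 0 then 0 else Suc (degree (a mod b))) < Suc (degree b)"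
        using degree_mod_less'[of b a] by auto
      then obtain g A B where g: "poly_over F g" "poly_over F A" "poly_over F B"
        "g = A * b + B * (a mod b)" "g dvd b" "g dvd a mod b"
        using less.hyps[of "a mod b" b] less.prems False poly_over_mod by auto
      have "g = B * a + (A - B * (a div b)) * b"
        using g(4) by (simp add: algebra_simps minus_div_mult_eq_mod[symmetric])
      moreover have "g dvd a" using g(5,6) by (metis dvd_mod_iff)
      ultimately show ?thesis using g less.prems
        by (intro exI[of _ g] exI[of _ B] exI[of _ "A - B * (a div b)"])
          (auto intro!: poly_over_diff poly_over_mult poly_over_div)
    qed
  qed
  thus ?thesis using that by blast
qed

end

definition irreducible_over :: "complex set \<Rightarrow> complex poly \<Rightarrow> bool" where
  "irreducible_over F P \<longleftrightarrow>
     (\<forall>h. poly_over F h \<longrightarrow> h dvd P \<longrightarrow> degree h = 0 \<or> degree h = degree P)"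

lemma dvd_of_same_degree:
  fixes g P :: "'a::field poly"
  assumes "g dvd P" "P \<noteq> 0" "degree g = degree P"
  shows "P dvd g"
proof -
  obtain k where k: "P = g * k" using assms(1) by blast
  hence "g \<noteq> 0" "k \<noteq> 0" using assms(2) by auto
  hence "degree k = 0" using k assms(3) degree_mult_eq[of g k] by simp
  then obtain c where "k = [:c:]" by (metis degree_eq_zeroE)
  hence "g = P * [:inverse c:]" using k \<open>k \<noteq> 0\<close> by (simp add: mult.assoc)
  thus ?thesis by (rule dvdI)
qed

lemma irreducible_over_bezout:
  assumes F: "complex_subfield F" and irr: "irreducible_over F P" and "P \<noteq> 0"
    and "poly_over F P" "poly_over F Q" and "\<not> P dvd Q"
  obtains A B where "poly_over F A" "poly_over F B" "A * P + B * Q = 1"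
proof -
  obtain g A B where g: "poly_over F g" "poly_over F A" "poly_over F B"
    "g = A * P + B * Q" "g dvd P" "g dvd Q"
    using poly_over_bezout[OF F assms(4,5)] .
  have "degree g \<noteq> degree P"
    using dvd_of_same_degree[OF g(5) \<open>P \<noteq> 0\<close>] g(6) \<open>\<not> P dvd Q\<close> dvd_trans by blast
  hence "degree g = 0" using irr g(1,5) by (auto simp: irreducible_over_def)
  then obtain c where c: "g = [:c:]" by (metis degree_eq_zeroE)
  have "c \<noteq> 0" "c \<in> F" using c g(1,5) \<open>P \<noteq> 0\<close> by (auto simp: poly_over_pCons_iff)
  hence "smult (inverse c) A * P + smult (inverse c) B * Q = 1"
    using g(4) c by (metis mult_smult_left smult_add_right smult_pCons smult_0_right
        one_pCons left_inverse)
  moreover have "poly_over F (smult (inverse c) A)" "poly_over F (smult (inverse c) B)"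
    using F g(2,3) \<open>c \<in> F\<close> by (auto intro!: poly_over_smult subfield_inverse)
  ultimately show ?thesis using that by blast
qed

lemma irreducible_over_dvd_of_common_root:
  assumes "complex_subfield F" "irreducible_over F P" "P \<noteq> 0"
    and "poly_over F P" "poly_over F U" and "poly P y = 0" "poly U y = 0"
  shows "P dvd U"
proof (rule ccontr)
  assume "\<not> P dvd U"
  then obtain A B where "A * P + B * U = 1"
    using irreducible_over_bezout[OF assms(1-5)] by blast
  hence "poly (A * P + B * U) y = 1" by simp
  thus False using assms(6,7) by simp
qed

section \<open>Capelli's theorem for odd exponents\<close>

lemma rsquarefree_dvd:
  assumes "rsquarefree P" "g dvd P"
  shows "rsquarefree g"
proof -
  obtain k where k: "P = g * k" using assms(2) by blast
  have "P \<noteq> 0" using assms(1) by (simp add: rsquarefree_def)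
  show ?thesis unfolding rsquarefree_def
  proof (intro conjI allI)
    show "g \<noteq> 0" using k \<open>P \<noteq> 0\<close> by auto
    fix x
    have "order x P = order x g + order x k" using k \<open>P \<noteq> 0\<close> order_mult[of g k x] by simp
    moreover have "order x P = 0 \<or> order x P = 1" using assms(1) by (simp add: rsquarefree_def)
    ultimately show "order x g = 0 \<or> order x g = 1" by arith
  qed
qed

lemma card_roots_rsquarefree:
  fixes p :: "complex poly"
  assumes "rsquarefree p"
  shows "card {z. poly p z = 0} = degree p"
proof -
  have "p \<noteq> 0" using assms by (simp add: rsquarefree_def)
  have "degree (smult (lead_coeff p) (\<Prod>z|poly p z = 0. [:-z, 1:])) = degree p"
    by (simp only: complex_poly_decompose_rsquarefree[OF assms])
  hence "degree p = degree (\<Prod>z|poly p z = 0. [:-z, 1:])"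
    using \<open>p \<noteq> 0\<close> by simp
  also have "\<dots> = card {z. poly p z = 0}"
    using poly_roots_finite[OF \<open>p \<noteq> 0\<close>] by (simp add: degree_prod_eq_sum_degree)
  finally show ?thesis ..
qed

lemma poly_0_rsquarefree:
  fixes p :: "complex poly"
  assumes "rsquarefree p"
  shows "poly p 0 = lead_coeff p * (-1) ^ degree p * (\<Prod>z|poly p z = 0. z)"
proof -
  have "poly p 0 = poly (smult (lead_coeff p) (\<Prod>z|poly p z = 0. [:-z, 1:])) 0"
    by (subst complex_poly_decompose_rsquarefree[OF assms]) simp
  also have "\<dots> = lead_coeff p * (\<Prod>z|poly p z = 0. - z)"
    by (simp add: poly_prod)
  finally show ?thesis by (simp add: prod_uminus card_roots_rsquarefree[OF assms])
qed

lemma prod_roots_in_subfield: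
  assumes F: "complex_subfield F" and "poly_over F p" "rsquarefree p"
  shows "(\<Prod>z|poly p z = 0. z) \<in> F"
proof -
  have "p \<noteq> 0" using assms(3) by (simp add: rsquarefree_def)
  have "(\<Prod>z|poly p z = 0. z) = poly p 0 / (lead_coeff p * (-1) ^ degree p)"
    using poly_0_rsquarefree[OF assms(3)] \<open>p \<noteq> 0\<close> by (simp add: field_simps)
  also have "\<dots> \<in> F"
    using F assms(2) by (intro subfield_divide subfield_mult subfield_power poly_in_subfield
        lead_coeff_in_subfield subfield_uminus subfield_1 subfield_0)
  finally show ?thesis .
qed

definition binom_poly :: "nat \<Rightarrow> complex \<Rightarrow> complex poly" where
  "binom_poly n a = monom 1 n - [:a:]"

lemma poly_binom_poly [simp]: "poly (binom_poly n a) x = x ^ n - a"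
  by (simp add: binom_poly_def poly_monom)

lemma degree_binom_poly [simp]: "n > 0 \<Longrightarrow> degree (binom_poly n a) = n"
  unfolding binom_poly_def diff_conv_add_uminus
  by (subst degree_add_eq_left) (auto simp: degree_monom_eq)

lemma binom_poly_nonzero: "n > 0 \<Longrightarrow> binom_poly n a \<noteq> 0"
  using degree_binom_poly[of n a] by (metis degree_0 less_irrefl_nat)

lemma poly_over_binom_poly: "complex_subfield F \<Longrightarrow> a \<in> F \<Longrightarrow> poly_over F (binom_poly n a)"
  unfolding binom_poly_def by (intro poly_over_diff poly_over_monom poly_over_const subfield_1)

lemma rsquarefree_binom_poly:
  assumes "n > 0" "a \<noteq> 0"
  shows "rsquarefree (binom_poly n a)"
  unfolding rsquarefree_roots
proof (intro allI notI)
  fix w assume "poly (binom_poly n a) w = 0 \<and> poly (pderiv (binom_poly n a)) w = 0"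
  hence "w ^ n = a" "of_nat n * w ^ (n - 1) = 0"
    by (auto simp: binom_poly_def pderiv_diff pderiv_monom pderiv_pCons poly_monom)
  thus False using assms by (auto simp: power_0_left)
qed

lemma prod_nth_roots_odd:
  fixes a :: complex
  assumes "odd n" "a \<noteq> 0"
  shows "(\<Prod>z|z ^ n = a. z) = a"
proof -
  have "n > 0" using assms(1) by (cases n) auto
  have "lead_coeff (binom_poly n a) = 1"
    using degree_binom_poly[OF \<open>n > 0\<close>] \<open>n > 0\<close> by (simp add: binom_poly_def coeff_pCons split: nat.split)
  thus ?thesis
    using poly_0_rsquarefree[OF rsquarefree_binom_poly[OF \<open>n > 0\<close> \<open>a \<noteq> 0\<close>]] \<open>n > 0\<close> assms(1)
    by (simp add: power_0_left)
qed

text \<open>The prime case of Capelli's theorem: the roots of a proper factor have a product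
  \<open>c \<in> F\<close> with \<open>c ^ p = a ^ r\<close>, and \<open>r\<close> is invertible modulo \<open>p\<close>.\<close>
lemma irreducible_over_binom_prime:
  assumes F: "complex_subfield F" and p: "prime p" and "a \<in> F" "a \<noteq> 0"
    and no_root: "\<not> (\<exists>b\<in>F. b ^ p = a)"
  shows "irreducible_over F (binom_poly p a)"
  unfolding irreducible_over_def
proof (intro allI impI)
  fix h assume h: "poly_over F h" "h dvd binom_poly p a"
  have "p > 0" using p prime_gt_0_nat by blast
  have "degree h \<le> p"
    using dvd_imp_degree_le[OF h(2) binom_poly_nonzero[OF \<open>p > 0\<close>]] \<open>p > 0\<close> by simp
  show "degree h = 0 \<or> degree h = degree (binom_poly p a)"
  proof (rule ccontr)
    assume "\<not> ?thesis"
    hence r: "0 < degree h" "degree h < p" using \<open>degree h \<le> p\<close> \<open>p > 0\<close> by auto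
    have sqf: "rsquarefree h"
      using rsquarefree_dvd[OF rsquarefree_binom_poly[OF \<open>p > 0\<close> \<open>a \<noteq> 0\<close>] h(2)] .
    define c where "c = (\<Prod>z|poly h z = 0. z)"
    have "c \<in> F" unfolding c_def by (rule prod_roots_in_subfield[OF F h(1) sqf])
    have "z ^ p = a" if "poly h z = 0" for z
      using that h(2) by (metis dvdE mult_eq_0_iff poly_binom_poly poly_mult right_minus_eq)
    hence "(\<Prod>z|poly h z = 0. z ^ p) = (\<Prod>z|poly h z = 0. a)" by (intro prod.cong) auto
    hence "c ^ p = a ^ degree h"
      by (simp add: c_def prod_power_distrib card_roots_rsquarefree[OF sqf])
    have "coprime (degree h) p"
      using r p by (metis coprime_commute dvd_imp_le not_le prime_imp_coprime)
    then obtain u w where uw: "degree h * u = p * w + 1"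
      using bezout_nat[of "degree h" p] r by (auto simp: coprime_iff_gcd_eq_1)
    have "(c ^ u / a ^ w) ^ p = (c ^ p) ^ u / (a ^ p) ^ w"
      by (simp add: power_divide power_mult[symmetric] mult.commute)
    also have "\<dots> = a"
      using \<open>c ^ p = a ^ degree h\<close> uw \<open>a \<noteq> 0\<close> by (simp add: power_mult[symmetric])
    finally show False
      using no_root F \<open>c \<in> F\<close> \<open>a \<in> F\<close> by (meson subfield_divide subfield_power)
  qed
qed

definition adjoin :: "complex set \<Rightarrow> complex \<Rightarrow> complex set" where
  "adjoin F y = {poly Q y | Q. poly_over F Q}"

lemma coeff_binom_poly_mult:
  "coeff (binom_poly m c * V) i = (if i < m then 0 else coeff V (i - m)) - c * coeff V i"
proof -
  have "binom_poly m c * V = monom 1 m * V - smult c V" by (simp add: binom_poly_def algebra_simps)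
  thus ?thesis by (simp add: coeff_monom_mult)
qed

locale prime_radical =
  fixes F :: "complex set" and p :: nat and a y :: complex
  assumes subfield: "complex_subfield F" and prime: "prime p" and a_in: "a \<in> F"
    and a_nonzero: "a \<noteq> 0" and root: "y ^ p = a"
    and irreducible: "irreducible_over F (binom_poly p a)"
begin

lemma p_pos: "p > 0"
  using prime prime_gt_0_nat by blast

lemma conjugate_root:
  assumes "poly_over F U" "poly U y = 0" "z ^ p = a"
  shows "poly U z = 0"
proof -
  have "binom_poly p a dvd U"
    using irreducible_over_dvd_of_common_root[OF subfield irreducible binom_poly_nonzero[OF p_pos]
        poly_over_binom_poly[OF subfield a_in] assms(1)] root assms(2) by simp
  thus ?thesis using assms(3) by (auto elim!: dvdE)
qed

lemma adjoin_subfield: "complex_subfield (adjoin F y)"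
proof -
  have const: "c \<in> adjoin F y" if "c \<in> F" for c
    unfolding adjoin_def using poly_over_const[OF subfield that] by force
  have ring: "poly Q1 y + poly Q2 y \<in> adjoin F y \<and> poly Q1 y * poly Q2 y \<in> adjoin F y
      \<and> - poly Q1 y \<in> adjoin F y" if "poly_over F Q1" "poly_over F Q2" for Q1 Q2
  proof -
    have "poly_over F (Q1 + Q2)" "poly_over F (Q1 * Q2)" "poly_over F (- Q1)"
      using that subfield by (auto intro: poly_over_add poly_over_mult poly_over_uminus)
    thus ?thesis unfolding adjoin_def by (metis (mono_tags, lifting) mem_Collect_eq poly_add
          poly_mult poly_minus)
  qed
  have inverse: "inverse (poly Q y) \<in> adjoin F y" if Q: "poly_over F Q" for Q
  proof (cases "poly Q y = 0")
    case True thus ?thesis using const[OF subfield_0[OF subfield]] by simp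
  next
    case False
    hence "\<not> binom_poly p a dvd Q" using root by (auto elim!: dvdE)
    then obtain A B where AB: "poly_over F A" "poly_over F B" "A * binom_poly p a + B * Q = 1"
      using irreducible_over_bezout[OF subfield irreducible binom_poly_nonzero[OF p_pos]
          poly_over_binom_poly[OF subfield a_in] Q] by blast
    hence "poly B y * poly Q y = 1" using root by (metis add_0 mult_zero_right poly_1 poly_add
          poly_binom_poly poly_mult right_minus_eq)
    hence "inverse (poly Q y) = poly B y" by (metis inverse_unique mult.commute)
    thus ?thesis using AB(2) unfolding adjoin_def by blast
  qed
  show ?thesis unfolding complex_subfield_def
    using const[OF subfield_0[OF subfield]] const[OF subfield_1[OF subfield]] ring inverse
    by (auto simp: adjoin_def)
qed

lemma subfield_subset_adjoin: "F \<subseteq> adjoin F y"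
  unfolding adjoin_def using poly_over_const[OF subfield] by force

lemma root_in_adjoin: "y \<in> adjoin F y"
  unfolding adjoin_def using poly_over_X[OF subfield] by force

lemma power_conjugate:
  assumes "poly_over F Q" "poly Q y ^ q = y" "w ^ p = a"
  shows "poly Q w ^ q = w"
  using conjugate_root[of "Q ^ q - [:0, 1:]" w] assms subfield
  by (simp add: poly_over_diff poly_over_power poly_over_X)

text \<open>The elements \<open>Q(w)\<close>, \<open>w\<close> ranging over the conjugates of \<open>y\<close>, are exactly the roots of
  the greatest common divisor of \<open>X^(pq) - a\<close> and \<open>X - Q(X^q)\<close>, a polynomial over \<open>F\<close>.\<close>
lemma prod_conjugates_in_subfield:
  assumes Q: "poly_over F Q" and "q > 0" and Qy: "poly Q y ^ q = y"
  shows "(\<Prod>w|w ^ p = a. poly Q w) \<in> F"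
proof -
  define Rt where "Rt = {w. w ^ p = a}"
  have Qw: "poly Q w ^ q = w" if "w \<in> Rt" for w
    using power_conjugate[OF Q Qy] that by (simp add: Rt_def)
  define M where "M = binom_poly (p * q) a"
  define V where "V = [:0, 1:] - pcompose Q (monom 1 q)"
  have "poly_over F M" unfolding M_def by (rule poly_over_binom_poly[OF subfield a_in])
  moreover have "poly_over F V" unfolding V_def using subfield Q
    by (intro poly_over_diff poly_over_pcompose poly_over_X poly_over_monom subfield_1)
  ultimately obtain g A B where g: "poly_over F g" "g = A * M + B * V" "g dvd M" "g dvd V"
    using poly_over_bezout[OF subfield] by metis
  have pq: "p * q > 0" using p_pos \<open>q > 0\<close> by simp
  have roots: "{z. poly g z = 0} = poly Q ` Rt"
  proof (intro equalityI subsetI)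
    fix z assume "z \<in> {z. poly g z = 0}"
    hence "poly M z = 0" "poly V z = 0" using g(3,4) by (auto elim!: dvdE)
    hence "(z ^ q) ^ p = a" "z = poly Q (z ^ q)"
      by (simp_all add: M_def V_def poly_pcompose poly_monom power_mult[symmetric] mult.commute)
    thus "z \<in> poly Q ` Rt" unfolding Rt_def by blast
  next
    fix z assume "z \<in> poly Q ` Rt"
    then obtain w where w: "w \<in> Rt" "z = poly Q w" by blast
    hence "z ^ q = w" "w ^ p = a" using Qw by (auto simp: Rt_def)
    hence "z ^ (p * q) = a" by (metis power_mult mult.commute)
    hence "poly M z = 0" "poly V z = 0" using w(2) \<open>z ^ q = w\<close>
      by (simp_all add: M_def V_def poly_pcompose poly_monom power_mult[symmetric] mult.commute)
    thus "z \<in> {z. poly g z = 0}" using g(2) by simp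
  qed
  have "inj_on (poly Q) Rt" using Qw by (metis inj_onI)
  moreover have "rsquarefree g"
    using rsquarefree_dvd[OF rsquarefree_binom_poly[OF pq a_nonzero]] g(3) by (simp add: M_def)
  ultimately show ?thesis
    using prod_roots_in_subfield[OF subfield g(1)] prod.reindex[of "poly Q" Rt id]
    by (simp add: roots Rt_def)
qed

text \<open>The norm of a \<open>q\<close>-th root of \<open>y\<close> in \<open>F(y)\<close> is a \<open>q\<close>-th root of the norm \<open>a\<close> of \<open>y\<close>
  (\<open>p\<close> odd makes the product of the conjugates of \<open>y\<close> equal to \<open>a\<close>).\<close>
lemma root_of_root_in_adjoin:
  assumes "odd p" "q > 0" "z \<in> adjoin F y" "z ^ q = y"
  obtains N where "N \<in> F" "N ^ q = a"
proof -
  obtain Q where Q: "poly_over F Q" "poly Q y = z" using assms(3) unfolding adjoin_def by blast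
  define N where "N = (\<Prod>w|w ^ p = a. poly Q w)"
  have "N \<in> F" unfolding N_def using prod_conjugates_in_subfield[OF Q(1) assms(2)] Q assms(4) by simp
  moreover have "N ^ q = a"
  proof -
    have "N ^ q = (\<Prod>w|w ^ p = a. poly Q w ^ q)" unfolding N_def by (rule prod_power_distrib)
    also have "\<dots> = (\<Prod>w|w ^ p = a. w)"
      using power_conjugate[OF Q(1)] Q(2) assms(4) by (intro prod.cong) auto
    also have "\<dots> = a" using prod_nth_roots_odd[OF assms(1) a_nonzero] .
    finally show ?thesis .
  qed
  ultimately show ?thesis using that by blast
qed

text \<open>Each coefficient of \<open>h = (X^m - y) W\<close> is a polynomial identity over \<open>F\<close> in \<open>y\<close>, once the
  coefficients of \<open>W \<in> F(y)[X]\<close> are written as polynomials in \<open>y\<close>; it persists on replacing \<open>y\<close> by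
  a conjugate \<open>z\<close>.\<close>
lemma binom_poly_conjugate_dvd:
  assumes h: "poly_over F h" and "m > 0" and dvd: "binom_poly m y dvd h" and "z ^ p = a"
  shows "binom_poly m z dvd h"
proof -
  define E where "E = adjoin F y"
  have E: "complex_subfield E" unfolding E_def by (rule adjoin_subfield)
  define W where "W = h div binom_poly m y"
  have hW: "h = binom_poly m y * W" unfolding W_def using dvd by simp
  have "poly_over E W" unfolding W_def E_def
    using poly_over_div[OF adjoin_subfield poly_over_mono[OF subfield_subset_adjoin h]
        poly_over_binom_poly[OF adjoin_subfield root_in_adjoin]] .
  hence "\<exists>Q. poly_over F Q \<and> poly Q y = coeff W i \<and> (coeff W i = 0 \<longrightarrow> Q = 0)" for i
  proof (cases "coeff W i = 0")
    case False
    assume "poly_over E W"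
    hence "coeff W i \<in> adjoin F y" by (simp add: poly_over_def E_def)
    thus ?thesis using False unfolding adjoin_def by force
  qed (use poly_over_0[OF subfield] in auto)
  then obtain Qs where Qs: "\<And>i. poly_over F (Qs i)" "\<And>i. poly (Qs i) y = coeff W i"
    "\<And>i. coeff W i = 0 \<Longrightarrow> Qs i = 0"
    by metis
  define W' where "W' = (\<Sum>i\<le>degree W. monom (poly (Qs i) z) i)"
  have coeff_W': "coeff W' j = poly (Qs j) z" for j
    using Qs(3)[of j] coeff_eq_0[of W j] by (cases "j \<le> degree W") (auto simp: W'_def coeff_sum)
  have "h = binom_poly m z * W'"
  proof (rule poly_eqI)
    fix i
    define C where "C = [:coeff h i:] - (if i < m then 0 else Qs (i - m)) + [:0, 1:] * Qs i"
    have "coeff h i \<in> F" using h by (simp add: poly_over_def)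
    hence "poly_over F C" unfolding C_def using subfield Qs(1) poly_over_0[OF subfield]
      by (intro poly_over_add poly_over_diff poly_over_const poly_over_mult poly_over_X) auto
    moreover have "poly C y = 0"
      using hW unfolding C_def by (simp add: coeff_binom_poly_mult Qs(2))
    ultimately have "poly C z = 0" using conjugate_root \<open>z ^ p = a\<close> by blast
    thus "coeff h i = coeff (binom_poly m z * W') i"
      unfolding C_def coeff_binom_poly_mult by (cases "i < m") (simp_all add: coeff_W' algebra_simps eq_neg_iff_add_eq_0 eq_diff_eq)
  qed
  thus ?thesis by (rule dvdI)
qed

lemma roots_subset_of_factor:
  assumes "m > 0" and irr: "irreducible_over (adjoin F y) (binom_poly m y)"
    and h: "poly_over F h" "poly h v = 0" and "v ^ m = y"
  shows "{w. w ^ (p * m) = a} \<subseteq> {w. poly h w = 0}"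
proof
  have "binom_poly m y dvd h"
    using irreducible_over_dvd_of_common_root[OF adjoin_subfield irr binom_poly_nonzero[OF \<open>m > 0\<close>]
        poly_over_binom_poly[OF adjoin_subfield root_in_adjoin]
        poly_over_mono[OF subfield_subset_adjoin h(1)]] h(2) \<open>v ^ m = y\<close> by simp
  fix w assume "w \<in> {w. w ^ (p * m) = a}"
  hence "(w ^ m) ^ p = a" by (simp add: power_mult[symmetric] mult.commute)
  hence "binom_poly m (w ^ m) dvd h"
    using binom_poly_conjugate_dvd[OF h(1) \<open>m > 0\<close> \<open>binom_poly m y dvd h\<close>] by blast
  thus "w \<in> {w. poly h w = 0}" by (auto elim!: dvdE)
qed

end

text \<open>For a prime \<open>p\<close> dividing \<open>n = p m\<close> and a root \<open>v\<close> of a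
  factor \<open>h\<close>, the hypothesis descends from \<open>F\<close> to \<open>F(v^m)\<close> by the norm argument, so by induction
  \<open>X^m - v^m\<close> is irreducible over \<open>F(v^m)\<close> and hence divides \<open>h\<close>, and so do all its conjugates.\<close>
theorem irreducible_over_binom_poly:
  assumes "complex_subfield F" "odd n" "a \<in> F" "a \<noteq> 0"
    and "\<And>q. prime q \<Longrightarrow> q dvd n \<Longrightarrow> \<not> (\<exists>b\<in>F. b ^ q = a)"
  shows "irreducible_over F (binom_poly n a)"
  using assms
proof (induction n arbitrary: F a rule: less_induct)
  case (less n F a)
  note F = less.prems(1)
  have "n > 0" using less.prems(2) by (cases n) auto
  show ?case unfolding irreducible_over_def
  proof (intro allI impI)
    fix h assume h: "poly_over F h" "h dvd binom_poly n a"
    have "h \<noteq> 0" using h(2) binom_poly_nonzero[OF \<open>n > 0\<close>] by auto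
    have "degree h \<le> n"
      using dvd_imp_degree_le[OF h(2) binom_poly_nonzero[OF \<open>n > 0\<close>]] \<open>n > 0\<close> by simp
    show "degree h = 0 \<or> degree h = degree (binom_poly n a)"
    proof (cases "degree h = 0 \<or> n = 1")
      case True thus ?thesis using \<open>degree h \<le> n\<close> by auto
    next
      case False
      obtain p where p: "prime p" "p dvd n" using prime_factor_nat False by blast
      define m where "m = n div p"
      have n: "n = p * m" using p(2) by (simp add: m_def)
      have "m > 0" "odd m" "odd p" using n \<open>n > 0\<close> less.prems(2) by auto
      have "m < n" using n \<open>m > 0\<close> prime_ge_2_nat[OF p(1)] by simp
      obtain v where v: "poly h v = 0" using alg_closed_imp_poly_has_root False by blast
      have "v ^ n = a"
        using v h(2) by (metis dvd_def mult_eq_0_iff poly_mult poly_binom_poly right_minus_eq)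
      define y where "y = v ^ m"
      have "y ^ p = a" using \<open>v ^ n = a\<close> by (simp add: y_def n power_mult[symmetric] mult.commute)
      interpret radical: prime_radical F p a y
        using F p less.prems(3,4,5) \<open>y ^ p = a\<close>
        by unfold_locales (auto intro: irreducible_over_binom_prime)
      have "y \<noteq> 0" using \<open>y ^ p = a\<close> less.prems(4) \<open>odd p\<close> by auto
      have no_root_adjoin: "\<not> (\<exists>b\<in>adjoin F y. b ^ q = y)" if "prime q" "q dvd m" for q
        using radical.root_of_root_in_adjoin[OF \<open>odd p\<close> prime_gt_0_nat[OF \<open>prime q\<close>]]
          less.prems(5)[OF \<open>prime q\<close>] that n by (metis dvd_mult)
      have "irreducible_over (adjoin F y) (binom_poly m y)"
        by (rule less.IH[OF \<open>m < n\<close> radical.adjoin_subfield \<open>odd m\<close> radical.root_in_adjoin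
              \<open>y \<noteq> 0\<close> no_root_adjoin])
      from radical.roots_subset_of_factor[OF \<open>m > 0\<close> this h(1) v]
      have "{w. w ^ n = a} \<subseteq> {w. poly h w = 0}" unfolding n y_def by blast
      hence "n \<le> card {w. poly h w = 0}"
        using card_mono[OF poly_roots_finite[OF \<open>h \<noteq> 0\<close>]] card_nth_roots[OF less.prems(4) \<open>n > 0\<close>]
        by metis
      thus ?thesis using card_poly_roots_bound[OF \<open>h \<noteq> 0\<close>] \<open>degree h \<le> n\<close> \<open>n > 0\<close> by simp
    qed
  qed
qed

section \<open>Dickson polynomials\<close>

definition of_rat_poly :: "rat poly \<Rightarrow> 'a::field_char_0 poly" where
  "of_rat_poly p = map_poly of_rat p"

lemma coeff_of_rat_poly [simp]: "coeff (of_rat_poly p) i = of_rat (coeff p i)"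
  by (simp add: of_rat_poly_def coeff_map_poly)

lemma of_rat_poly_eq_iff [simp]: "of_rat_poly p = of_rat_poly q \<longleftrightarrow> p = q"
  by (auto simp: poly_eq_iff)

lemma of_rat_poly_0 [simp]: "of_rat_poly 0 = 0"
  and of_rat_poly_1 [simp]: "of_rat_poly 1 = 1"
  and of_rat_poly_pCons [simp]: "of_rat_poly (pCons c p) = pCons (of_rat c) (of_rat_poly p)"
  and of_rat_poly_add [simp]: "of_rat_poly (p + q) = of_rat_poly p + of_rat_poly q"
  and of_rat_poly_diff [simp]: "of_rat_poly (p - q) = of_rat_poly p - of_rat_poly q"
  and of_rat_poly_smult [simp]: "of_rat_poly (smult c p) = smult (of_rat c) (of_rat_poly p)"
  and of_rat_poly_mult [simp]: "of_rat_poly (p * q) = of_rat_poly p * of_rat_poly q"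
  by (simp_all add: poly_eq_iff coeff_pCons of_rat_add of_rat_diff of_rat_mult coeff_mult
      of_rat_sum split: nat.split)

lemma of_rat_poly_monom [simp]: "of_rat_poly (monom c n) = monom (of_rat c) n"
  by (simp add: of_rat_poly_def map_poly_monom)

lemma of_rat_poly_sum: "of_rat_poly (sum f A) = (\<Sum>x\<in>A. of_rat_poly (f x))"
  by (induction A rule: infinite_finite_induct) auto

lemma of_rat_poly_power [simp]: "of_rat_poly (p ^ n) = of_rat_poly p ^ n"
  by (induction n) auto

lemma of_rat_poly_pcompose [simp]: "of_rat_poly (pcompose p q) = pcompose (of_rat_poly p) (of_rat_poly q)"
  by (induction p) (auto simp: pcompose_pCons)

lemma degree_of_rat_poly [simp]: "degree (of_rat_poly p) = degree p"
  by (simp add: of_rat_poly_def degree_map_poly)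

lemma poly_of_rat_poly_of_rat [simp]: "poly (of_rat_poly p) (of_rat x) = of_rat (poly p x)"
  by (induction p) (auto simp: of_rat_add of_rat_mult)

fun dickson :: "nat \<Rightarrow> 'a::comm_ring_1 \<Rightarrow> 'a poly" where
  "dickson 0 c = [:2:]"
| "dickson (Suc 0) c = [:0, 1:]"
| "dickson (Suc (Suc n)) c = [:0, 1:] * dickson (Suc n) c - smult c (dickson n c)"

lemma poly_dickson:
  fixes u c :: "'a::field"
  assumes "u \<noteq> 0"
  shows "poly (dickson n c) (u + c / u) = u ^ n + (c / u) ^ n"
proof (induction n c rule: dickson.induct)
  case (3 n c)
  define w where "w = c / u"
  have "c = u * w" using assms by (simp add: w_def)
  show ?case using 3 unfolding w_def[symmetric] by (simp add: \<open>c = u * w\<close> algebra_simps)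
qed simp_all

lemma of_rat_poly_dickson [simp]: "of_rat_poly (dickson n c) = dickson n (of_rat c)"
  by (induction n c rule: dickson.induct) (simp_all add: one_pCons)

lemma degree_dickson:
  "n \<ge> 1 \<Longrightarrow> degree (dickson n (c::'a::idom)) = n \<and> coeff (dickson n c) n = 1"
proof (induction n c rule: dickson.induct)
  case (3 n c)
  show ?case
  proof (cases n)
    case 0 thus ?thesis by (simp add: numeral_2_eq_2 degree_add_eq_left one_pCons)
  next
    case (Suc k)
    hence IH: "degree (dickson (Suc n) c) = Suc n" "coeff (dickson (Suc n) c) (Suc n) = 1"
      "degree (dickson n c) = n" using 3 by auto
    have "dickson (Suc n) c \<noteq> 0" using IH(2) by auto
    hence "degree (pCons 0 (dickson (Suc n) c)) = Suc (Suc n)" using IH(1) by simp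
    moreover have "degree (- smult c (dickson n c)) \<le> n"
      using degree_smult_le[of c "dickson n c"] IH(3) by simp
    moreover have "dickson (Suc (Suc n)) c = pCons 0 (dickson (Suc n) c) + - smult c (dickson n c)"
      by simp
    ultimately have "degree (dickson (Suc (Suc n)) c) = Suc (Suc n)"
      by (metis degree_add_eq_left le_imp_less_Suc less_SucI)
    moreover have "coeff (dickson (Suc (Suc n)) c) (Suc (Suc n)) = 1"
      using IH by (simp add: coeff_eq_0)
    ultimately show ?thesis by simp
  qed
qed auto

lemma ex_plus_divide_eq:
  fixes c z :: complex
  assumes "c \<noteq> 0"
  obtains u where "u \<noteq> 0" "z = u + c / u"
proof -
  define u where "u = (z + csqrt (z\<^sup>2 - 4 * c)) / 2"
  have "(csqrt (z\<^sup>2 - 4 * c))\<^sup>2 = z\<^sup>2 - 4 * c" by simp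
  hence "u * (z - u) = c" unfolding u_def by (simp add: field_simps power2_eq_square)
  moreover from this have "u \<noteq> 0" using assms by auto
  ultimately show ?thesis using that by (auto simp: field_simps)
qed

lemma dickson_mult_complex:
  fixes c :: complex
  assumes "c \<noteq> 0"
  shows "dickson (p * m) c = pcompose (dickson p (c ^ m)) (dickson m c)"
proof -
  have "poly (dickson (p * m) c) z = poly (pcompose (dickson p (c ^ m)) (dickson m c)) z" for z
  proof -
    obtain u where "u \<noteq> 0" "z = u + c / u" using ex_plus_divide_eq[OF assms] .
    thus ?thesis
      by (simp add: poly_pcompose poly_dickson power_divide power_mult[symmetric] mult.commute)
  qed
  thus ?thesis by (intro poly_eq_poly_eq_iff[THEN iffD1] ext)
qed

lemma dickson_mult:
  fixes c :: rat
  assumes "c \<noteq> 0"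
  shows "dickson (p * m) c = pcompose (dickson p (c ^ m)) (dickson m c)"
proof -
  have "(of_rat_poly (dickson (p * m) c) :: complex poly) =
      of_rat_poly (pcompose (dickson p (c ^ m)) (dickson m c))"
    using dickson_mult_complex[of "of_rat c" p m] assms by (simp add: of_rat_power)
  thus ?thesis by (simp only: of_rat_poly_eq_iff)
qed

text \<open>The integer \<open>n / (n - j) * ((n - j) choose j)\<close>, written without division.\<close>
definition dickson_nat_coeff :: "nat \<Rightarrow> nat \<Rightarrow> nat" where
  "dickson_nat_coeff n j = (if j = 0 then 1 else (n - j choose j) + (n - j - 1 choose (j - 1)))"

lemma dickson_nat_coeff_Suc_Suc:
  assumes "2 * Suc j \<le> n + 1"
  shows "dickson_nat_coeff (n + 2) (Suc j) = dickson_nat_coeff (n + 1) (Suc j) + dickson_nat_coeff n j"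
proof (cases j)
  case (Suc k)
  define t where "t = n - k - 2"
  have "n = t + k + 2" using assms Suc by (simp add: t_def)
  thus ?thesis unfolding dickson_nat_coeff_def using Suc by (simp add: numeral_2_eq_2)
qed (use assms in \<open>simp add: dickson_nat_coeff_def\<close>)

lemma dickson_nat_coeff_even:
  "m \<ge> 1 \<Longrightarrow> dickson_nat_coeff (2 * m + 2) (Suc m) = dickson_nat_coeff (2 * m) m"
  by (cases m) (simp_all add: dickson_nat_coeff_def)

lemma of_nat_dickson_nat_coeff:
  assumes "j < n"
  shows "(of_nat (dickson_nat_coeff n j) :: 'a::field_char_0) = of_nat n / of_nat (n - j) * of_nat ((n - j) choose j)"
proof (cases "j = 0")
  case False
  have "Suc (n - j - 1) * (n - j - 1 choose (j - 1)) = (Suc (n - j - 1) choose Suc (j - 1)) * Suc (j - 1)"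
    by (rule Suc_times_binomial_eq)
  hence "(n - j) * (n - j - 1 choose (j - 1)) = (n - j choose j) * j"
    using False assms by (simp add: Suc_diff_Suc)
  hence "(n - j) * dickson_nat_coeff n j = n * (n - j choose j)"
    using False assms by (simp add: dickson_nat_coeff_def algebra_simps)
  hence "(of_nat (n - j) :: 'a) * of_nat (dickson_nat_coeff n j) = of_nat n * of_nat (n - j choose j)"
    by (metis of_nat_mult)
  moreover have "(of_nat (n - j) :: 'a) \<noteq> 0" using assms by simp
  ultimately show ?thesis by (simp add: field_simps)
qed (use assms in \<open>simp add: dickson_nat_coeff_def\<close>)

definition dickson_coeff :: "nat \<Rightarrow> 'a::comm_ring_1 \<Rightarrow> nat \<Rightarrow> 'a" where
  "dickson_coeff n c i = (if i \<le> n \<and> even (n - i)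
     then (-1) ^ ((n - i) div 2) * of_nat (dickson_nat_coeff n ((n - i) div 2)) * c ^ ((n - i) div 2)
     else 0)"

lemma dickson_coeff_Suc_Suc:
  assumes "n \<ge> 1"
  shows "dickson_coeff (Suc (Suc n)) c i =
    (case i of 0 \<Rightarrow> 0 | Suc i' \<Rightarrow> dickson_coeff (Suc n) c i') - c * dickson_coeff n c i"
proof (cases i)
  case 0
  show ?thesis
  proof (cases "even n")
    case True
    then obtain m where m: "n = 2 * m" by blast
    hence "m \<ge> 1" using assms by simp
    thus ?thesis using 0 m dickson_nat_coeff_even[of m] by (simp add: dickson_coeff_def algebra_simps)
  qed (use 0 in \<open>simp add: dickson_coeff_def\<close>)
next
  case (Suc i')
  have "\<not> (i' \<le> Suc n \<and> even (Suc n - i')) \<or> i' = Suc n \<or> (\<exists>j. Suc n - i' = 2 * Suc j)"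
    by presburger
  then consider "\<not> (i' \<le> Suc n \<and> even (Suc n - i'))" | "i' = Suc n"
    | j where "Suc n - i' = 2 * Suc j" by blast
  thus ?thesis
  proof cases
    case 1 thus ?thesis using Suc by (auto simp: dickson_coeff_def)
  next
    case 2 thus ?thesis using Suc by (simp add: dickson_coeff_def dickson_nat_coeff_def)
  next
    case 3
    hence "n - Suc i' = 2 * j" "Suc i' \<le> n" "i' \<le> Suc n" by arith+
    hence e: "dickson_coeff (Suc (Suc n)) c (Suc i') =
        (-1) ^ Suc j * of_nat (dickson_nat_coeff (n + 2) (Suc j)) * c ^ Suc j"
      "dickson_coeff (Suc n) c i' = (-1) ^ Suc j * of_nat (dickson_nat_coeff (n + 1) (Suc j)) * c ^ Suc j"
      "dickson_coeff n c (Suc i') = (-1) ^ j * of_nat (dickson_nat_coeff n j) * c ^ j"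
      using 3 by (simp_all add: dickson_coeff_def)
    have "dickson_nat_coeff (n + 2) (Suc j) = dickson_nat_coeff (n + 1) (Suc j) + dickson_nat_coeff n j"
      using 3 by (intro dickson_nat_coeff_Suc_Suc) simp
    thus ?thesis unfolding Suc nat.case e by (simp add: algebra_simps)
  qed
qed

lemma coeff_dickson: "n \<ge> 1 \<Longrightarrow> coeff (dickson n c) i = dickson_coeff n c i"
proof (induction n c arbitrary: i rule: dickson.induct)
  case (2 c)
  show ?case by (cases i) (auto simp: dickson_coeff_def dickson_nat_coeff_def coeff_pCons split: nat.split)
next
  case (3 n c)
  show ?case
  proof (cases "n = 0")
    case True thus ?thesis
      by (cases i) (auto simp: dickson_coeff_def dickson_nat_coeff_def coeff_pCons numeral_2_eq_2
          split: nat.split)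
  next
    case False
    thus ?thesis using 3 dickson_coeff_Suc_Suc[of n c i] by (simp add: coeff_pCons split: nat.split)
  qed
qed simp_all

lemma dickson_odd_eq_sum:
  assumes "odd n"
  shows "dickson n c = (\<Sum>j\<in>{0..(n - 1) div 2}.
    monom ((-1) ^ j * of_nat (dickson_nat_coeff n j) * c ^ j) (n - 2 * j))"
    (is "_ = (\<Sum>j\<in>{0..?k}. monom (?t j) (n - 2 * j))")
proof (rule poly_eqI)
  fix i
  have n: "n = 2 * ?k + 1" using assms by presburger
  have "coeff (\<Sum>j\<in>{0..?k}. monom (?t j) (n - 2 * j)) i = (\<Sum>j\<in>{0..?k}. if n - 2 * j = i then ?t j else 0)"
    by (simp add: coeff_sum coeff_monom)
  also have "\<dots> = (\<Sum>j\<in>{0..?k}. if j = (n - i) div 2 then (if i \<le> n \<and> even (n - i) then ?t j else 0) else 0)"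
  proof (intro sum.cong refl)
    fix j assume "j \<in> {0..?k}"
    hence "n - 2 * j = i \<longleftrightarrow> j = (n - i) div 2 \<and> i \<le> n \<and> even (n - i)" using n by auto
    thus "(if n - 2 * j = i then ?t j else 0) =
        (if j = (n - i) div 2 then (if i \<le> n \<and> even (n - i) then ?t j else 0) else 0)" by auto
  qed
  also have "\<dots> = dickson_coeff n c i"
    using n by (cases "i = 0") (auto simp: dickson_coeff_def)
  finally show "coeff (dickson n c) i = coeff (\<Sum>j\<in>{0..?k}. monom (?t j) (n - 2 * j)) i"
    using coeff_dickson[of n c i] n by simp
qed

lemma fpoly_eq_dickson:
  assumes "odd n"
  shows "fpoly n d R = dickson n (d\<^sup>2 - R) - [:2 * d * (d\<^sup>2 - R) ^ ((n - 1) div 2):]"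
proof -
  have "j < n" if "j \<in> {0..(n - 1) div 2}" for j using that assms by (cases n) auto
  hence "(\<Sum>j\<in>{0..(n - 1) div 2}. monom ((-1) ^ j * (of_nat n / of_nat (n - j)) *
      of_nat ((n - j) choose j) * (d\<^sup>2 - R) ^ j) (n - 2 * j)) =
    (\<Sum>j\<in>{0..(n - 1) div 2}. monom ((-1) ^ j * of_nat (dickson_nat_coeff n j) * (d\<^sup>2 - R) ^ j) (n - 2 * j))"
    by (intro sum.cong refl) (simp add: of_nat_dickson_nat_coeff)
  thus ?thesis unfolding fpoly_def Let_def dickson_odd_eq_sum[OF assms] by simp
qed

section \<open>The quadratic field\<close>

lemma poly_over_of_rat_poly: "complex_subfield F \<Longrightarrow> poly_over F (of_rat_poly p)"
  by (simp add: poly_over_def subfield_of_rat)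

lemma of_real_of_rat_complex: "(of_real (of_rat r) :: complex) = of_rat r"
  by (cases r) (simp add: of_rat_rat)

lemma rat_odd_power_inj:
  fixes x y :: rat
  assumes "odd p" "x ^ p = y ^ p"
  shows "x = y"
proof -
  have "(of_rat x :: real) ^ p = of_rat y ^ p" using assms(2) by (metis of_rat_power)
  hence "root p ((of_rat x :: real) ^ p) = root p (of_rat y ^ p)" by simp
  thus ?thesis using odd_real_root_power_cancel[OF assms(1)] by simp
qed

lemma quad_field_eq: "quad_field R = {of_rat a + of_rat b * sqrtR R | a b. True}"
  unfolding quad_field_def of_real_of_rat_complex ..

lemma sqrtR_square: "sqrtR R ^ 2 = of_rat R"
  by (simp add: sqrtR_def of_real_of_rat_complex)

lemma sqrtR_in_quad_field: "sqrtR R \<in> quad_field R"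
  unfolding quad_field_eq by (intro CollectI exI[of _ 0] exI[of _ 1]) simp

definition lift_plus_divide :: "rat \<Rightarrow> rat poly \<Rightarrow> rat poly" where
  "lift_plus_divide c g = (\<Sum>i\<le>degree g. smult (coeff g i) (monom 1 (degree g - i) * [:c, 0, 1:] ^ i))"

lemma poly_lift_plus_divide:
  fixes u :: "'a::field_char_0"
  assumes "u \<noteq> 0"
  shows "poly (of_rat_poly (lift_plus_divide c g)) u = u ^ degree g * poly (of_rat_poly g) (u + of_rat c / u)"
proof -
  have *: "u ^ degree g * (u + of_rat c / u) ^ i = u ^ (degree g - i) * (of_rat c + u * u) ^ i"
    if "i \<le> degree g" for i
  proof -
    have "u ^ degree g = u ^ (degree g - i) * u ^ i" using that by (simp flip: power_add)
    moreover have "u * (u + of_rat c / u) = of_rat c + u * u" using assms by (simp add: field_simps)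
    ultimately show ?thesis by (metis mult.assoc power_mult_distrib)
  qed
  have "u ^ degree g * poly (of_rat_poly g) (u + of_rat c / u) =
      (\<Sum>i\<le>degree g. of_rat (coeff g i) * (u ^ degree g * (u + of_rat c / u) ^ i))"
    by (simp add: poly_altdef sum_distrib_left algebra_simps)
  also have "\<dots> = (\<Sum>i\<le>degree g. of_rat (coeff g i) * (u ^ (degree g - i) * (of_rat c + u * u) ^ i))"
    using * by (intro sum.cong refl) simp
  also have "\<dots> = poly (of_rat_poly (lift_plus_divide c g)) u"
    by (simp add: lift_plus_divide_def of_rat_poly_sum poly_sum poly_monom)
  finally show ?thesis by simp
qed

context
  fixes R :: rat
  assumes nonsquare: "\<not> (\<exists>q. q\<^sup>2 = R)"
begin

lemma sqrtR_not_rat: "sqrtR R \<noteq> of_rat q"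
proof
  assume "sqrtR R = of_rat q"
  hence "of_rat (q\<^sup>2) = (of_rat R :: complex)" using sqrtR_square[of R] by (simp add: of_rat_power)
  thus False using nonsquare by simp
qed

lemma quad_norm_nonzero:
  assumes "x \<noteq> 0 \<or> y \<noteq> 0"
  shows "x\<^sup>2 - y\<^sup>2 * R \<noteq> 0"
proof
  assume "x\<^sup>2 - y\<^sup>2 * R = 0"
  moreover from this assms have "y \<noteq> 0" by auto
  ultimately have "(x / y)\<^sup>2 = R" by (simp add: field_simps power2_eq_square)
  thus False using nonsquare by blast
qed

lemma complex_subfield_quad_field: "complex_subfield (quad_field R)"
proof -
  let ?s = "sqrtR R"
  let ?f = "\<lambda>x y. of_rat x + of_rat y * ?s :: complex"
  have mem: "?f x y \<in> quad_field R" for x y unfolding quad_field_eq by blast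
  have norm: "?f x y * ?f x (- y) = of_rat (x\<^sup>2 - y\<^sup>2 * R)" for x y
    using sqrtR_square[of R] by (simp add: algebra_simps power2_eq_square of_rat_diff of_rat_mult of_rat_minus)
  have "?f x y + ?f x' y' = ?f (x + x') (y + y')"
    and "?f x y * ?f x' y' = ?f (x * x' + y * y' * R) (x * y' + y * x')"
    and "- ?f x y = ?f (- x) (- y)"
    and "inverse (?f x y) = ?f (x / (x\<^sup>2 - y\<^sup>2 * R)) (- y / (x\<^sup>2 - y\<^sup>2 * R))" for x y x' y'
  proof -
    show "?f x y + ?f x' y' = ?f (x + x') (y + y')" by (simp add: of_rat_add algebra_simps)
    show "?f x y * ?f x' y' = ?f (x * x' + y * y' * R) (x * y' + y * x')"
      using sqrtR_square[of R] by (simp add: of_rat_add of_rat_mult algebra_simps power2_eq_square)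
    show "- ?f x y = ?f (- x) (- y)" by (simp add: of_rat_minus)
    show "inverse (?f x y) = ?f (x / (x\<^sup>2 - y\<^sup>2 * R)) (- y / (x\<^sup>2 - y\<^sup>2 * R))"
    proof (cases "x = 0 \<and> y = 0")
      case False
      hence "(of_rat (x\<^sup>2 - y\<^sup>2 * R) :: complex) \<noteq> 0" using quad_norm_nonzero by simp
      hence "?f x y * (?f x (- y) / of_rat (x\<^sup>2 - y\<^sup>2 * R)) = 1" using norm[of x y] by simp
      moreover have "?f x (- y) / of_rat (x\<^sup>2 - y\<^sup>2 * R) = ?f (x / (x\<^sup>2 - y\<^sup>2 * R)) (- y / (x\<^sup>2 - y\<^sup>2 * R))"
        by (simp add: of_rat_divide of_rat_minus diff_divide_distrib)
      ultimately show ?thesis by (metis inverse_unique)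
    qed simp
  qed
  hence "u + v \<in> quad_field R \<and> u * v \<in> quad_field R \<and> - u \<in> quad_field R \<and> inverse u \<in> quad_field R"
    if "u \<in> quad_field R" "v \<in> quad_field R" for u v
    using that mem unfolding quad_field_eq by auto
  moreover have "0 \<in> quad_field R" "1 \<in> quad_field R" using mem[of 0 0] mem[of 1 0] by simp_all
  ultimately show ?thesis unfolding complex_subfield_def by blast
qed

text \<open>The conjugation \<open>sqrt R \<mapsto> - sqrt R\<close>: reduce modulo the minimal polynomial \<open>X^2 - R\<close>.\<close>
lemma poly_of_rat_poly_conjugate:
  assumes "poly (of_rat_poly W) (sqrtR R) = 0"
  shows "poly (of_rat_poly W) (- sqrtR R) = 0"
proof -
  define M where "M = [:- R, 0, 1:]"
  define r where "r = W mod M"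
  have "M \<noteq> 0" by (simp add: M_def)
  have "degree r < 2" using degree_mod_less'[of M W] \<open>M \<noteq> 0\<close> unfolding r_def
    by (cases "W mod M = 0") (auto simp: M_def)
  hence r: "r = [:coeff r 0, coeff r 1:]"
    by (intro poly_eqI) (auto simp: coeff_pCons coeff_eq_0 split: nat.split)
  have W: "W = M * (W div M) + r" unfolding r_def by simp
  have M: "poly (of_rat_poly M) (sqrtR R) = 0" "poly (of_rat_poly M) (- sqrtR R) = 0"
    using sqrtR_square[of R] by (simp_all add: M_def power2_eq_square of_rat_minus)
  have "poly (of_rat_poly r) (sqrtR R) = 0"
    using assms M(1) by (subst (asm) W) simp
  hence "of_rat (coeff r 0) + of_rat (coeff r 1) * sqrtR R = 0" by (subst (asm) r) (simp add: mult.commute)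
  moreover have "coeff r 1 = 0"
  proof (rule ccontr)
    assume "coeff r 1 \<noteq> 0"
    with calculation have "sqrtR R = of_rat (- coeff r 0 / coeff r 1)"
      by (simp add: of_rat_divide of_rat_minus field_simps) (metis add.commute add_eq_0_iff2 mult.commute)
    thus False using sqrtR_not_rat by blast
  qed
  ultimately have "r = 0" by (subst r) simp
  thus ?thesis using M(2) by (subst W) simp
qed

end

section \<open>Irreducibility of \<open>f_n\<close>\<close>

locale fpoly_context =
  fixes n :: nat and d R :: rat
  assumes odd_n: "odd n" and nonsquare: "\<not> (\<exists>q. q\<^sup>2 = R)"
begin

abbreviation "s \<equiv> sqrtR R"
abbreviation "K \<equiv> quad_field R"

definition "D = d\<^sup>2 - R"
definition "k = (n - 1) div 2"
definition "\<alpha> = of_rat d + s"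
definition "\<alpha>' = of_rat d - s"
definition "a = of_rat (D ^ k) * \<alpha>"
definition "a' = of_rat (D ^ k) * \<alpha>'"

lemma n_eq: "n = 2 * k + 1"
  unfolding k_def using odd_n by presburger

lemma n_pos: "n > 0"
  using odd_n by (cases n) auto

lemma D_nonzero: "D \<noteq> 0"
  using nonsquare unfolding D_def by auto

lemma alpha_mult: "\<alpha> * \<alpha>' = of_rat D"
  unfolding \<alpha>_def \<alpha>'_def D_def using sqrtR_square[of R]
  by (simp add: algebra_simps power2_eq_square of_rat_diff of_rat_mult)

lemma alpha_nonzero: "\<alpha> \<noteq> 0" "\<alpha>' \<noteq> 0"
  using alpha_mult D_nonzero by auto

lemma a_nonzero: "a \<noteq> 0" "a' \<noteq> 0"
  unfolding a_def a'_def using alpha_nonzero D_nonzero by auto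

lemma a_mult: "a * a' = of_rat (D ^ n)"
proof -
  have "a * a' = of_rat (D ^ k) ^ 2 * (\<alpha> * \<alpha>')" unfolding a_def a'_def
    by (simp add: power2_eq_square algebra_simps)
  also have "\<dots> = of_rat (D ^ n)"
    by (subst n_eq) (simp add: alpha_mult of_rat_mult of_rat_power power_add power_mult mult.commute)
  finally show ?thesis .
qed

lemma a_add: "a + a' = of_rat (2 * d * D ^ k)"
  unfolding a_def a'_def \<alpha>_def \<alpha>'_def by (simp add: of_rat_mult algebra_simps)

lemma a_square: "a ^ 2 = of_rat (D ^ n) * (\<alpha> / \<alpha>')"
  using a_mult alpha_nonzero unfolding a_def a'_def by (simp add: field_simps power2_eq_square)

lemma a_ne_a': "a \<noteq> a'"
  using sqrtR_not_rat[OF nonsquare, of 0] D_nonzero by (simp add: a_def a'_def \<alpha>_def \<alpha>'_def)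

lemma a_in_quad_field: "a \<in> K"
  unfolding a_def \<alpha>_def using complex_subfield_quad_field[OF nonsquare] sqrtR_in_quad_field
  by (intro subfield_mult subfield_add subfield_of_rat)

lemma fpoly_eq: "fpoly n d R = dickson n D - [:2 * d * D ^ k:]"
  unfolding D_def k_def by (rule fpoly_eq_dickson[OF odd_n])

lemma degree_fpoly: "degree (fpoly n d R) = n"
  unfolding fpoly_eq diff_conv_add_uminus using degree_dickson[of n D] n_pos
  by (subst degree_add_eq_left) auto

lemma fpoly_nonzero: "fpoly n d R \<noteq> 0"
  using degree_fpoly n_pos by auto

lemma poly_fpoly_plus_divide:
  assumes "u \<noteq> 0"
  shows "u ^ n * poly (of_rat_poly (fpoly n d R)) (u + of_rat D / u) = (u ^ n - a) * (u ^ n - a')"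
proof -
  have "poly (of_rat_poly (fpoly n d R)) (u + of_rat D / u) = u ^ n + of_rat (D ^ n) / u ^ n - (a + a')"
    unfolding fpoly_eq a_add using poly_dickson[OF assms]
    by (simp add: power_divide of_rat_power of_rat_mult)
  thus ?thesis using assms by (simp add: a_mult[symmetric] field_simps)
qed

lemma root_of_factor:
  assumes "g dvd fpoly n d R" "degree g \<ge> 1"
  obtains w where "w ^ n = a" "w \<noteq> 0" "poly (of_rat_poly g) (w + of_rat D / w) = 0"
proof -
  obtain z where z: "poly (of_rat_poly g :: complex poly) z = 0"
    using alg_closed_imp_poly_has_root[of "of_rat_poly g"] assms(2) by auto
  obtain u where u: "u \<noteq> 0" "z = u + of_rat D / u"
    using ex_plus_divide_eq D_nonzero by (metis of_rat_eq_0_iff)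
  have "poly (of_rat_poly (fpoly n d R)) z = 0"
    using z assms(1) by (auto elim!: dvdE)
  hence "u ^ n = a \<or> u ^ n = a'" using poly_fpoly_plus_divide[OF u(1)] u(2) by simp
  thus ?thesis
  proof
    assume "u ^ n = a"
    thus ?thesis using that[of u] u z by simp
  next
    assume "u ^ n = a'"
    hence "(of_rat D / u) ^ n = a" using a_mult a_nonzero u(1) by (simp add: power_divide of_rat_power field_simps)
    moreover have "of_rat D / u + of_rat D / (of_rat D / u) = z" using u D_nonzero by simp
    ultimately show ?thesis using that[of "of_rat D / u"] u(1) D_nonzero z by simp
  qed
qed

lemma inj_on_plus_divide: "inj_on (\<lambda>w. w + of_rat D / w) {w. w ^ n = a}"
proof (rule inj_onI)
  fix w1 w2 assume w: "w1 \<in> {w. w ^ n = a}" "w2 \<in> {w. w ^ n = a}"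
    and eq: "w1 + of_rat D / w1 = w2 + of_rat D / w2"
  have "w1 \<noteq> 0" "w2 \<noteq> 0" using w a_nonzero n_pos by (auto simp: power_0_left)
  hence "(w1 - w2) * (w1 * w2 - of_rat D) = 0" using eq by (simp add: field_simps)
  moreover have "w1 * w2 \<noteq> of_rat D"
  proof
    assume "w1 * w2 = of_rat D"
    hence "(w1 * w2) ^ n = of_rat (D ^ n)" by (simp add: of_rat_power)
    hence "a * a = a * a'" using w a_mult by (simp add: power_mult_distrib)
    thus False using a_nonzero a_ne_a' by simp
  qed
  ultimately show "w1 = w2" by simp
qed

lemma degree_factor_ge:
  assumes irr: "irreducible_over K (binom_poly n a)"
    and g: "g dvd fpoly n d R" "degree g \<ge> 1"
  shows "n \<le> degree g"
proof -
  have K: "complex_subfield K" by (rule complex_subfield_quad_field[OF nonsquare])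
  define G where "G = (of_rat_poly (lift_plus_divide D g) :: complex poly)"
  obtain w where w: "w ^ n = a" "w \<noteq> 0" "poly (of_rat_poly g) (w + of_rat D / w) = 0"
    using root_of_factor[OF g] .
  have "binom_poly n a dvd G"
    using irreducible_over_dvd_of_common_root[OF K irr binom_poly_nonzero[OF n_pos]
        poly_over_binom_poly[OF K a_in_quad_field] poly_over_of_rat_poly[OF K]]
      poly_lift_plus_divide[OF w(2)] w by (simp add: G_def)
  have roots: "(\<lambda>w. w + of_rat D / w) ` {w. w ^ n = a} \<subseteq> {z. poly (of_rat_poly g) z = 0}"
  proof (rule image_subsetI)
    fix v assume "v \<in> {w. w ^ n = a}"
    hence "poly G v = 0" "v \<noteq> 0"
      using \<open>binom_poly n a dvd G\<close> a_nonzero n_pos by (auto simp: power_0_left elim!: dvdE)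
    thus "v + of_rat D / v \<in> {z. poly (of_rat_poly g) z = 0}"
      using poly_lift_plus_divide[OF \<open>v \<noteq> 0\<close>] by (simp add: G_def)
  qed
  have "of_rat_poly g \<noteq> (0 :: complex poly)" using g(2) of_rat_poly_eq_iff[of g 0] by auto
  have "n = card ((\<lambda>w. w + of_rat D / w) ` {w. w ^ n = a})"
    using card_image[OF inj_on_plus_divide] card_nth_roots[OF a_nonzero(1) n_pos] by simp
  also have "\<dots> \<le> card {z. poly (of_rat_poly g :: complex poly) z = 0}"
    using roots poly_roots_finite[OF \<open>of_rat_poly g \<noteq> 0\<close>] by (rule card_mono[rotated])
  also have "\<dots> \<le> degree g"
    using card_poly_roots_bound[OF \<open>of_rat_poly g \<noteq> 0\<close>] by simp
  finally show ?thesis .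
qed

lemma irreducible_fpoly:
  assumes "irreducible_over K (binom_poly n a)"
  shows "irreducible (fpoly n d R)"
  unfolding irreducible_def
proof (intro conjI allI impI)
  show "fpoly n d R \<noteq> 0" by (rule fpoly_nonzero)
  show "\<not> fpoly n d R dvd 1"
    using is_unit_iff_degree[OF fpoly_nonzero] degree_fpoly n_pos by simp
next
  fix g h assume gh: "fpoly n d R = g * h"
  hence "g \<noteq> 0" "h \<noteq> 0" "degree g + degree h = n"
    using fpoly_nonzero degree_fpoly degree_mult_eq[of g h] by auto
  have "degree g = 0 \<or> degree h = 0"
  proof (rule ccontr)
    assume "\<not> ?thesis"
    hence "n \<le> degree g" "degree h \<ge> 1" using degree_factor_ge[OF assms, of g] gh by auto
    thus False using \<open>degree g + degree h = n\<close> by simp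
  qed
  thus "g dvd 1 \<or> h dvd 1" using is_unit_iff_degree \<open>g \<noteq> 0\<close> \<open>h \<noteq> 0\<close> by auto
qed

lemma pth_root_of_a_iff:
  assumes "p dvd n"
  shows "(\<exists>b\<in>K. b ^ p = a) \<longleftrightarrow> (\<exists>x\<in>K. x ^ p = \<alpha> / \<alpha>')"
proof -
  have K: "complex_subfield K" by (rule complex_subfield_quad_field[OF nonsquare])
  obtain m where n: "n = p * m" using assms by blast
  have "odd p" using n odd_n by auto
  have D_pow: "(of_rat (D ^ m) :: complex) ^ p = of_rat (D ^ n)"
    by (simp add: n of_rat_power power_mult mult.commute)
  show ?thesis
  proof
    assume "\<exists>b\<in>K. b ^ p = a"
    then obtain b where b: "b \<in> K" "b ^ p = a" by blast
    have "(b\<^sup>2 / of_rat (D ^ m)) ^ p = a\<^sup>2 / of_rat (D ^ n)"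
      using b(2) D_pow by (simp add: power_divide flip: power_mult power_mult_distrib)
        (simp add: power_mult mult.commute)
    also have "\<dots> = \<alpha> / \<alpha>'" using a_square D_nonzero by simp
    finally show "\<exists>x\<in>K. x ^ p = \<alpha> / \<alpha>'"
      using b(1) K by (meson subfield_divide subfield_power subfield_of_rat)
  next
    assume "\<exists>x\<in>K. x ^ p = \<alpha> / \<alpha>'"
    then obtain x where x: "x \<in> K" "x ^ p = \<alpha> / \<alpha>'" by blast
    define u where "u = (p + 1) div 2"
    have u: "2 * u = p + 1" using \<open>odd p\<close> unfolding u_def by presburger
    have "(x ^ u * of_rat (D ^ m) ^ u / a) ^ p = ((x ^ p) * of_rat (D ^ m) ^ p) ^ u / a ^ p"
      by (simp add: power_divide power_mult_distrib flip: power_mult) (simp add: mult.commute)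
    also have "\<dots> = (a\<^sup>2) ^ u / a ^ p" using x(2) D_pow a_square by (simp add: mult.commute)
    also have "\<dots> = a" using u a_nonzero by (simp flip: power_mult)
    finally show "\<exists>b\<in>K. b ^ p = a"
      using x(1) K a_in_quad_field by (meson subfield_divide subfield_mult subfield_power subfield_of_rat)
  qed
qed

lemma conjugate_pth_root:
  assumes "y \<in> K" "y ^ p = a"
  obtains y0 y1 where "y = of_rat y0 + of_rat y1 * s" "(of_rat y0 - of_rat y1 * s) ^ p = a'"
proof -
  obtain y0 y1 where y: "y = of_rat y0 + of_rat y1 * s" using assms(1) unfolding quad_field_eq by blast
  define W where "W = [:y0, y1:] ^ p - [:D ^ k * d, D ^ k:]"
  have "poly (of_rat_poly W) s = y ^ p - a"
    unfolding W_def y a_def \<alpha>_def by (simp add: of_rat_mult algebra_simps)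
  hence "poly (of_rat_poly W) (- s) = 0"
    using assms(2) poly_of_rat_poly_conjugate[OF nonsquare] by simp
  hence "(of_rat y0 - of_rat y1 * s) ^ p = a'"
    unfolding W_def a'_def \<alpha>'_def by (simp add: of_rat_mult algebra_simps)
  thus ?thesis using that y by blast
qed

lemma dickson_root_of_pth_root:
  assumes n: "n = p * m" and y: "y \<in> K" "y ^ p = a"
  obtains c where "poly (dickson p (D ^ m)) c = 2 * d * D ^ k"
proof -
  have "odd p" using n odd_n by auto
  obtain y0 y1 where y0: "y = of_rat y0 + of_rat y1 * s" and y'a: "(of_rat y0 - of_rat y1 * s) ^ p = a'"
    using conjugate_pth_root[OF y] .
  define y' where "y' = of_rat y0 - of_rat y1 * s"
  define N where "N = y0\<^sup>2 - y1\<^sup>2 * R"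
  have yy': "y * y' = of_rat N" unfolding y0 y'_def N_def using sqrtR_square[of R]
    by (simp add: algebra_simps power2_eq_square of_rat_diff of_rat_mult)
  have "D ^ n = (D ^ m) ^ p" by (simp add: n power_mult mult.commute)
  have "(of_rat (N ^ p) :: complex) = (y * y') ^ p" using yy' by (simp add: of_rat_power)
  also have "\<dots> = a * a'" using y(2) y'a by (simp add: y'_def power_mult_distrib)
  also have "\<dots> = of_rat ((D ^ m) ^ p)" using a_mult \<open>D ^ n = (D ^ m) ^ p\<close> by simp
  finally have "(of_rat (N ^ p) :: complex) = of_rat ((D ^ m) ^ p)" .
  hence "N = D ^ m" using rat_odd_power_inj[OF \<open>odd p\<close>] by simp
  hence "y * y' = of_rat (D ^ m)" using yy' by simp
  hence "y \<noteq> 0" "y' = of_rat (D ^ m) / y" using D_nonzero by (auto simp: eq_divide_eq mult.commute)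
  have "y + y' = of_rat (2 * y0)" by (simp add: y0 y'_def of_rat_mult)
  have "(of_rat (poly (dickson p (D ^ m)) (2 * y0)) :: complex) =
      poly (of_rat_poly (dickson p (D ^ m))) (of_rat (2 * y0))"
    by (simp only: poly_of_rat_poly_of_rat)
  also have "\<dots> = poly (dickson p (of_rat (D ^ m))) (y + of_rat (D ^ m) / y)"
    using \<open>y + y' = of_rat (2 * y0)\<close> \<open>y' = of_rat (D ^ m) / y\<close> by simp
  also have "\<dots> = y ^ p + y' ^ p" using poly_dickson[OF \<open>y \<noteq> 0\<close>] \<open>y' = of_rat (D ^ m) / y\<close> by simp
  also have "\<dots> = of_rat (2 * d * D ^ k)" using y(2) y'a a_add by (simp add: y'_def)
  finally show ?thesis using that[of "2 * y0"] by (simp only: of_rat_eq_iff)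
qed

lemma not_irreducible_fpoly:
  assumes n: "n = p * m" and "p > 1" and c: "poly (dickson p (D ^ m)) c = 2 * d * D ^ k"
  shows "\<not> irreducible (fpoly n d R)"
proof
  assume irr: "irreducible (fpoly n d R)"
  have "m \<ge> 1" "m < n" using n n_pos \<open>p > 1\<close> by auto
  have "poly (dickson p (D ^ m) - [:2 * d * D ^ k:]) c = 0" using c by simp
  hence "[:- c, 1:] dvd dickson p (D ^ m) - [:2 * d * D ^ k:]" by (simp only: poly_eq_0_iff_dvd)
  then obtain W where W: "dickson p (D ^ m) - [:2 * d * D ^ k:] = [:- c, 1:] * W" ..
  have "dickson n D = pcompose (dickson p (D ^ m)) (dickson m D)"
    using dickson_mult[OF D_nonzero, of p m] n by simp
  hence "fpoly n d R = pcompose (dickson p (D ^ m) - [:2 * d * D ^ k:]) (dickson m D)"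
    unfolding fpoly_eq by (simp add: pcompose_diff)
  also have "\<dots> = (dickson m D - [:c:]) * pcompose W (dickson m D)"
    unfolding W pcompose_mult by (simp add: pcompose_pCons)
  finally have fgh: "fpoly n d R = (dickson m D - [:c:]) * pcompose W (dickson m D)" .
  have "degree (dickson m D - [:c:]) = m"
    unfolding diff_conv_add_uminus using degree_dickson[OF \<open>m \<ge> 1\<close>, of D] \<open>m \<ge> 1\<close>
    by (subst degree_add_eq_left) auto
  moreover have nz: "dickson m D - [:c:] \<noteq> 0" "pcompose W (dickson m D) \<noteq> 0"
    using fgh fpoly_nonzero by auto
  ultimately have "n = m + degree (pcompose W (dickson m D))"
    using fgh degree_fpoly degree_mult_eq[OF nz] by simp
  hence "\<not> is_unit (dickson m D - [:c:])" "\<not> is_unit (pcompose W (dickson m D))"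
    using \<open>degree (dickson m D - [:c:]) = m\<close> \<open>m \<ge> 1\<close> \<open>m < n\<close> is_unit_iff_degree[OF nz(1)]
      is_unit_iff_degree[OF nz(2)] by auto
  thus False using irr fgh by (auto simp: irreducible_def)
qed

theorem irreducible_fpoly_iff:
  "irreducible (fpoly n d R) \<longleftrightarrow> (\<forall>p. prime p \<and> p dvd n \<longrightarrow> \<not> (\<exists>x\<in>K. x ^ p = \<alpha> / \<alpha>'))"
proof
  assume irr: "irreducible (fpoly n d R)"
  show "\<forall>p. prime p \<and> p dvd n \<longrightarrow> \<not> (\<exists>x\<in>K. x ^ p = \<alpha> / \<alpha>')"
  proof (intro allI impI notI)
    fix p assume p: "prime p \<and> p dvd n" and "\<exists>x\<in>K. x ^ p = \<alpha> / \<alpha>'"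
    then obtain y where "y \<in> K" "y ^ p = a" using pth_root_of_a_iff by blast
    moreover obtain m where "n = p * m" using p by blast
    ultimately obtain c where "poly (dickson p (D ^ m)) c = 2 * d * D ^ k"
      using dickson_root_of_pth_root by blast
    thus False using not_irreducible_fpoly[OF \<open>n = p * m\<close> prime_gt_1_nat] p irr by blast
  qed
next
  assume "\<forall>p. prime p \<and> p dvd n \<longrightarrow> \<not> (\<exists>x\<in>K. x ^ p = \<alpha> / \<alpha>')"
  hence "\<not> (\<exists>b\<in>K. b ^ q = a)" if "prime q" "q dvd n" for q using that pth_root_of_a_iff by blast
  thus "irreducible (fpoly n d R)"
    by (intro irreducible_fpoly irreducible_over_binom_poly complex_subfield_quad_field[OF nonsquare]
        odd_n a_in_quad_field a_nonzero)
qed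

end

theorem theorem2:
  fixes n :: nat and d R :: rat
  assumes "odd n" and "n \<ge> 3" and "d \<noteq> 0" and "\<not> (\<exists>q::rat. q^2 = R)"
  shows "irreducible (fpoly n d R) \<longleftrightarrow>
    (\<forall>p::nat. prime p \<and> p dvd n \<longrightarrow>
       \<not> (\<exists>x\<in>quad_field R.
             x ^ p = (of_real (of_rat d) + sqrtR R) / (of_real (of_rat d) - sqrtR R)))"
proof -
  interpret fpoly_context n d R using assms by unfold_locales auto
  show ?thesis
    using irreducible_fpoly_iff unfolding \<alpha>_def \<alpha>'_def of_real_of_rat_complex .
qed

end
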